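(* Let $N\ge2$ and let $H\in M_{(N-1)\times N}(\mathbb T)$ be partial Hadamard. For $j=1,\ldots,N$ let $H^{(j)}\in M_{N-1}(\mathbb C)$ be obtained from $H$ by removing its $j$-th column. The following are equivalent: (1) $H$ can be completed (by adding an $N$-th row) to an $N\times N$ complex Hadamard matrix; (2) $|\det H^{(j)}|$ is independent of $j$; (3) $|\det H^{(j)}|=N^{N/2-1}$ for every $j$. If so, a completion is obtained by setting $H_{Nj}=(-1)^jN^{1-N/2}\,\overline{\det H^{(j)}}$.
   Context: $\mathbb T$ is the unit circle. A partial Hadamard matrix is a matrix with entries in $\mathbb T$ whose rows are pairwise orthogonal; an $N\times N$ complex Hadamard matrix is a partial Hadamard matrix in $M_N(\mathbb T)$. *)

theory Defs
  imports Complex_Main "Jordan_Normal_Form.Determinant"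
begin

text \<open>Matrices are Jordan_Normal_Form matrices; indices are 0-based.
  Entries in the unit circle T means norm 1.\<close>

definition partial_hadamard :: "nat \<Rightarrow> nat \<Rightarrow> complex mat \<Rightarrow> bool" where
  "partial_hadamard m n A \<longleftrightarrow>
     A \<in> carrier_mat m n \<and>
     (\<forall>i<m. \<forall>j<n. cmod (A $$ (i, j)) = 1) \<and>
     (\<forall>i<m. \<forall>k<m. i \<noteq> k \<longrightarrow> (\<Sum>j<n. A $$ (i, j) * cnj (A $$ (k, j))) = 0)"

definition complex_hadamard :: "nat \<Rightarrow> complex mat \<Rightarrow> bool" where
  "complex_hadamard n A \<longleftrightarrow> partial_hadamard n n A"

definition remove_col :: "nat \<Rightarrow> complex mat \<Rightarrow> complex mat" where
  "remove_col j A = mat (dim_row A) (dim_col A - 1)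
      (\<lambda>(i, k). A $$ (i, if k < j then k else Suc k))"

text \<open>The explicit completion: last row entry at 0-based column j (paper's column j+1)
  is (-1)^(j+1) N^(1-N/2) conj(det H^(j+1)).\<close>
definition hadamard_completion :: "nat \<Rightarrow> complex mat \<Rightarrow> complex mat" where
  "hadamard_completion N H = mat N N (\<lambda>(i, j).
      if i < N - 1 then H $$ (i, j)
      else (-1) ^ (j + 1) * complex_of_real (real N powr (1 - real N / 2))
             * cnj (det (remove_col j H)))"

end

theory Submission
  imports Defs
begin

text \<open>Let \<open>r\<close> be the vector of cofactors of a row appended to \<open>H\<close>, so that
  \<open>det [H; x] = \<Sum>j. x\<^sub>j r\<^sub>j\<close>. Then \<open>r\<close> is orthogonal to the rows of \<open>H\<close>, and comparing
  \<open>|det [H; cnj r]|\<^sup>2\<close> with the Gram determinant of \<open>[H; cnj r]\<close> gives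
  \<open>\<Sum>j. |r\<^sub>j|\<^sup>2 = N\<^bsup>N-1\<^esup>\<close>. The last row of any completion is orthogonal to the rows of \<open>H\<close>,
  and column orthogonality of the completion forces it to be proportional to \<open>cnj r\<close>,
  so all \<open>|r\<^sub>j|\<close> coincide and hence equal \<open>N\<^bsup>N/2-1\<^esup>\<close>. Conversely, if they do, the
  rescaled \<open>cnj r\<close> is a unimodular row orthogonal to \<open>H\<close>: this is the completion.\<close>

lemma det_map_mat_cnj: "det (map_mat cnj M) = cnj (det (M :: complex mat))"
  unfolding det_def by (simp add: cnj_sum cnj_prod)

lemma det_mult_cnj_orthogonal_rows:
  assumes M: "M \<in> carrier_mat m m"
    and orth: "\<And>i k. i < m \<Longrightarrow> k < m \<Longrightarrow>
      (\<Sum>j<m. M $$ (i, j) * cnj (M $$ (k, j))) = (if i = k then d i else 0)"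
  shows "det M * cnj (det M) = (\<Prod>i<m. d i)"
proof -
  let ?M' = "transpose_mat (map_mat cnj M)"
  let ?D = "mat m m (\<lambda>(i, j). if i = j then d i else 0)"
  have M': "?M' \<in> carrier_mat m m" using M by simp
  have "M * ?M' = ?D"
    by (rule eq_matI) (use M orth in \<open>auto simp: scalar_prod_def atLeast0LessThan\<close>)
  then have "det ?D = det M * cnj (det M)"
    using det_mult[OF M M'] det_transpose[of "map_mat cnj M" m] M by (simp add: det_map_mat_cnj)
  moreover have "det ?D = prod_list (diag_mat ?D)"
    by (rule det_upper_triangular[of _ m]) (auto simp: upper_triangular_def)
  moreover have "diag_mat ?D = map d [0..<m]" by (auto simp: diag_mat_def)
  ultimately show ?thesis
    by (simp add: prod.distinct_set_conv_list[symmetric] atLeast0LessThan)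
qed

lemma sum_mult_cnj_eq_0D:
  assumes "(\<Sum>j\<in>A. x j * cnj (x j)) = 0" "finite A" "j \<in> A"
  shows "x j = 0"
proof -
  have "(\<Sum>j\<in>A. x j * cnj (x j)) = of_real (\<Sum>j\<in>A. (cmod (x j))\<^sup>2)"
    by (simp only: of_real_sum complex_norm_square)
  then have "(\<Sum>j\<in>A. (cmod (x j))\<^sup>2) = 0" using assms(1) by (metis of_real_eq_0_iff)
  then show ?thesis using assms(2,3) by (simp add: sum_nonneg_eq_0_iff)
qed

lemma partial_hadamard_inner:
  assumes "partial_hadamard m n H" "i < m" "k < m"
  shows "(\<Sum>j<n. H $$ (i, j) * cnj (H $$ (k, j))) = (if i = k then of_nat n else 0)"
proof (cases "i = k")
  case True
  have "H $$ (i, j) * cnj (H $$ (i, j)) = 1" if "j < n" for j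
    using assms that unfolding partial_hadamard_def by (simp add: complex_norm_square[symmetric])
  then show ?thesis using True by simp
qed (use assms in \<open>auto simp: partial_hadamard_def\<close>)

definition append_row :: "complex mat \<Rightarrow> (nat \<Rightarrow> complex) \<Rightarrow> complex mat" where
  "append_row H x = mat (Suc (dim_row H)) (dim_col H)
      (\<lambda>(i, j). if i < dim_row H then H $$ (i, j) else x j)"

definition last_row_cofactor :: "complex mat \<Rightarrow> nat \<Rightarrow> complex" where
  "last_row_cofactor H j = (-1) ^ (dim_row H + j) * det (remove_col j H)"

lemma cmod_last_row_cofactor: "cmod (last_row_cofactor H j) = cmod (det (remove_col j H))"
  by (simp add: last_row_cofactor_def norm_mult norm_power)

lemma det_append_row:
  assumes H: "H \<in> carrier_mat n (Suc n)"
  shows "det (append_row H x) = (\<Sum>j<Suc n. x j * last_row_cofactor H j)"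
proof -
  let ?A = "append_row H x"
  have "det ?A = (\<Sum>j<Suc n. ?A $$ (n, j) * cofactor ?A n j)"
    by (rule laplace_expansion_row) (use H in \<open>auto simp: append_row_def\<close>)
  also have "\<dots> = (\<Sum>j<Suc n. x j * last_row_cofactor H j)"
  proof (rule sum.cong[OF refl])
    fix j assume j: "j \<in> {..<Suc n}"
    have "mat_delete ?A n j = remove_col j H"
      by (rule eq_matI) (use H in \<open>auto simp: mat_delete_def remove_col_def append_row_def\<close>)
    then show "?A $$ (n, j) * cofactor ?A n j = x j * last_row_cofactor H j"
      using H j by (simp add: cofactor_def last_row_cofactor_def append_row_def)
  qed
  finally show ?thesis .
qed

text \<open>Appending a copy of row \<open>i\<close> gives a singular matrix.\<close>

lemma last_row_cofactor_orthogonal: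
  assumes H: "H \<in> carrier_mat n (Suc n)" and i: "i < n"
  shows "(\<Sum>j<Suc n. H $$ (i, j) * last_row_cofactor H j) = 0"
proof -
  have "det (append_row H (\<lambda>j. H $$ (i, j))) = 0"
    by (rule det_identical_rows[of _ "Suc n" i n]) (use H i in \<open>auto simp: append_row_def\<close>)
  then show ?thesis using det_append_row[OF H] by simp
qed

lemma append_row_inner:
  assumes PH: "partial_hadamard n m H"
    and orth: "\<And>i. i < n \<Longrightarrow> (\<Sum>j<m. H $$ (i, j) * cnj (x j)) = 0"
    and i: "i < Suc n" and k: "k < Suc n"
  shows "(\<Sum>j<m. append_row H x $$ (i, j) * cnj (append_row H x $$ (k, j))) =
    (if i = k then if i < n then of_nat m else (\<Sum>j<m. x j * cnj (x j)) else 0)"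
proof -
  have H: "H \<in> carrier_mat n m" using PH by (simp add: partial_hadamard_def)
  have row: "append_row H x $$ (l, j) = (if l < n then H $$ (l, j) else x j)"
    if "l < Suc n" "j < m" for l j
    using H that by (simp add: append_row_def)
  have orth': "(\<Sum>j<m. x j * cnj (H $$ (l, j))) = 0" if "l < n" for l
    using arg_cong[OF orth[OF that], of cnj] by (simp add: cnj_sum mult.commute)
  show ?thesis
    using partial_hadamard_inner[OF PH] orth orth' i k by (auto simp: row less_Suc_eq)
qed

lemma partial_hadamard_append_row:
  assumes PH: "partial_hadamard n m H"
    and orth: "\<And>i. i < n \<Longrightarrow> (\<Sum>j<m. H $$ (i, j) * cnj (x j)) = 0"
    and unit: "\<And>j. j < m \<Longrightarrow> cmod (x j) = 1"
  shows "partial_hadamard (Suc n) m (append_row H x)"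
proof -
  have H: "H \<in> carrier_mat n m" using PH by (simp add: partial_hadamard_def)
  have "cmod (append_row H x $$ (i, j)) = 1" if "i < Suc n" "j < m" for i j
    using PH unit H that by (auto simp: append_row_def partial_hadamard_def)
  then show ?thesis
    using append_row_inner[OF PH orth] H by (simp add: partial_hadamard_def append_row_def)
qed

lemma det_append_row_orthogonal:
  assumes PH: "partial_hadamard n (Suc n) H"
    and orth: "\<And>i. i < n \<Longrightarrow> (\<Sum>j<Suc n. H $$ (i, j) * cnj (x j)) = 0"
  shows "det (append_row H x) * cnj (det (append_row H x)) =
    of_nat (Suc n) ^ n * (\<Sum>j<Suc n. x j * cnj (x j))"
proof -
  let ?d = "\<lambda>i. if i < n then of_nat (Suc n) else \<Sum>j<Suc n. x j * cnj (x j)"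
  have "H \<in> carrier_mat n (Suc n)" using PH by (simp add: partial_hadamard_def)
  then have "append_row H x \<in> carrier_mat (Suc n) (Suc n)" by (simp add: append_row_def)
  then have "det (append_row H x) * cnj (det (append_row H x)) = (\<Prod>i<Suc n. ?d i)"
    using append_row_inner[OF PH orth] by (rule det_mult_cnj_orthogonal_rows)
  then show ?thesis by (simp add: mult.commute)
qed

text \<open>The witness is the first unit vector minus its projection onto the rows of \<open>H\<close>.\<close>

lemma last_row_cofactor_nonzero:
  assumes PH: "partial_hadamard n (Suc n) H"
  shows "\<exists>j<Suc n. last_row_cofactor H j \<noteq> 0"
proof -
  have H: "H \<in> carrier_mat n (Suc n)" using PH by (simp add: partial_hadamard_def)
  define c :: complex where "c = 1 / of_nat (Suc n)"
  define y where "y j = (if j = 0 then 1 else 0) - c * (\<Sum>i<n. cnj (H $$ (i, 0)) * H $$ (i, j))" for j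
  have orth: "(\<Sum>j<Suc n. H $$ (l, j) * cnj (y j)) = 0" if l: "l < n" for l
  proof -
    have "(\<Sum>j<Suc n. H $$ (l, j) * cnj (y j)) = (\<Sum>j<Suc n. (if j = 0 then H $$ (l, j) else 0)
      - c * (\<Sum>i<n. H $$ (i, 0) * (H $$ (l, j) * cnj (H $$ (i, j)))))"
      by (intro sum.cong refl)
        (simp add: y_def c_def cnj_sum right_diff_distrib sum_distrib_left ac_simps)
    also have "\<dots> =
      H $$ (l, 0) - c * (\<Sum>j<Suc n. \<Sum>i<n. H $$ (i, 0) * (H $$ (l, j) * cnj (H $$ (i, j))))"
      by (simp add: sum_subtractf sum_distrib_left sum.delta' del: sum.lessThan_Suc)
    also have "(\<Sum>j<Suc n. \<Sum>i<n. H $$ (i, 0) * (H $$ (l, j) * cnj (H $$ (i, j)))) =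
      (\<Sum>i<n. H $$ (i, 0) * (\<Sum>j<Suc n. H $$ (l, j) * cnj (H $$ (i, j))))"
      by (subst sum.swap) (simp add: sum_distrib_left del: sum.lessThan_Suc)
    also have "\<dots> = (\<Sum>i<n. if i = l then H $$ (l, 0) * of_nat (Suc n) else 0)"
      by (intro sum.cong refl) (use partial_hadamard_inner[OF PH l] in auto)
    also have "\<dots> = H $$ (l, 0) * of_nat (Suc n)" using l by simp
    finally show ?thesis by (simp add: c_def del: of_nat_Suc sum.lessThan_Suc)
  qed
  have c: "c * of_nat (Suc n) = 1" by (simp add: c_def del: of_nat_Suc)
  have "y 0 = 1 - c * of_nat n"
    using PH by (simp add: y_def partial_hadamard_def complex_norm_square[symmetric] mult.commute)
  then have "y 0 \<noteq> 0" using c by (auto simp: algebra_simps)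
  then have "(\<Sum>j<Suc n. y j * cnj (y j)) \<noteq> 0" using sum_mult_cnj_eq_0D[of y] by blast
  then have "det (append_row H y) \<noteq> 0"
    using det_append_row_orthogonal[OF PH orth] by (auto simp del: of_nat_Suc sum.lessThan_Suc)
  then have "(\<Sum>j<Suc n. y j * last_row_cofactor H j) \<noteq> 0"
    using det_append_row[OF H] by (simp del: sum.lessThan_Suc)
  then show ?thesis by (metis (no_types, lifting) lessThan_iff mult_zero_right sum.neutral)
qed

lemma last_row_cofactor_norm:
  assumes PH: "partial_hadamard n (Suc n) H"
  shows "(\<Sum>j<Suc n. last_row_cofactor H j * cnj (last_row_cofactor H j)) = of_nat (Suc n) ^ n"
proof -
  have H: "H \<in> carrier_mat n (Suc n)" using PH by (simp add: partial_hadamard_def)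
  define r where "r = last_row_cofactor H"
  define S where "S = (\<Sum>j<Suc n. r j * cnj (r j))"
  let ?x = "\<lambda>j. cnj (r j)"
  have orth: "(\<Sum>j<Suc n. H $$ (i, j) * cnj (?x j)) = 0" if "i < n" for i
    using last_row_cofactor_orthogonal[OF H that] by (simp add: r_def)
  have det: "det (append_row H ?x) = S"
    using det_append_row[OF H] by (simp add: S_def r_def mult.commute del: sum.lessThan_Suc)
  have norm: "(\<Sum>j<Suc n. ?x j * cnj (?x j)) = S"
    by (simp add: S_def mult.commute del: sum.lessThan_Suc)
  have "cnj S = S" by (simp add: S_def cnj_sum mult.commute del: sum.lessThan_Suc)
  moreover have "S * cnj S = of_nat (Suc n) ^ n * S"
    using det_append_row_orthogonal[OF PH orth] unfolding det norm .
  ultimately have "S * S = of_nat (Suc n) ^ n * S" by simp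
  moreover have "S \<noteq> 0"
  proof -
    obtain j where "j < Suc n" "r j \<noteq> 0" using last_row_cofactor_nonzero[OF PH] r_def by blast
    then show ?thesis by (metis S_def finite_lessThan lessThan_iff sum_mult_cnj_eq_0D)
  qed
  ultimately have "S = of_nat (Suc n) ^ n" by simp
  then show ?thesis by (simp only: S_def r_def)
qed

lemma cmod_det_remove_col_const_value:
  assumes PH: "partial_hadamard n (Suc n) H"
    and const: "\<And>j. j < Suc n \<Longrightarrow> cmod (det (remove_col j H)) = c"
  shows "c = real (Suc n) powr (real (Suc n) / 2 - 1)"
proof -
  define N where "N = real (Suc n)"
  have N: "N > 0" by (simp add: N_def)
  have "(\<Sum>j<Suc n. last_row_cofactor H j * cnj (last_row_cofactor H j)) =
    (\<Sum>j<Suc n. complex_of_real (c\<^sup>2))"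
    by (intro sum.cong refl) (metis const lessThan_iff complex_norm_square cmod_last_row_cofactor)
  then have "complex_of_real (N * c\<^sup>2) = of_nat (Suc n) ^ n"
    using last_row_cofactor_norm[OF PH] by (simp add: N_def del: of_nat_Suc sum.lessThan_Suc)
  then have "N * c\<^sup>2 = N ^ n" by (metis N_def of_real_eq_iff of_real_of_nat_eq of_real_power)
  then have "c\<^sup>2 = N ^ n / N" using N by (simp add: eq_divide_eq mult.commute)
  also have "\<dots> = N powr (real n - 1)" using N by (simp add: powr_diff powr_realpow)
  also have "real n - 1 = (N / 2 - 1) + (N / 2 - 1)" by (simp add: N_def)
  finally have "c\<^sup>2 = (N powr (N / 2 - 1))\<^sup>2" by (simp only: powr_add power2_eq_square)
  then show ?thesis
    using const[OF zero_less_Suc] by (metis N_def norm_ge_zero powr_ge_zero power2_eq_imp_eq)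
qed

lemma complex_hadamard_col_inner:
  assumes K: "complex_hadamard N K" and a: "a < N" and b: "b < N"
  shows "(\<Sum>i<N. cnj (K $$ (i, a)) * K $$ (i, b)) = (if a = b then of_nat N else 0)"
proof -
  have KP: "partial_hadamard N N K" using K by (simp add: complex_hadamard_def)
  have Kc: "K \<in> carrier_mat N N" using KP by (simp add: partial_hadamard_def)
  have N: "(of_nat N :: complex) \<noteq> 0" using a by simp
  define B where "B = mat N N (\<lambda>(i, j). cnj (K $$ (j, i)) / of_nat N)"
  have Bc: "B \<in> carrier_mat N N" by (simp add: B_def)
  have "K * B = 1\<^sub>m N"
  proof (rule eq_matI)
    fix i k assume "i < dim_row (1\<^sub>m N)" "k < dim_col (1\<^sub>m N)"
    then show "(K * B) $$ (i, k) = 1\<^sub>m N $$ (i, k)"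
      using Kc partial_hadamard_inner[OF KP, of i k] N
      by (simp add: B_def scalar_prod_def atLeast0LessThan flip: sum_divide_distrib)
  qed (use Kc Bc in auto)
  then have "B * K = 1\<^sub>m N" using mat_mult_left_right_inverse[OF Kc Bc] by simp
  then have "(B * K) $$ (a, b) = (if a = b then 1 else 0)" using a b by simp
  then show ?thesis
    using a b Kc N
    by (simp add: B_def scalar_prod_def atLeast0LessThan field_simps flip: sum_divide_distrib
        split: if_splits)
qed

text \<open>With \<open>r\<close> the cofactors, \<open>K r = d e\<^sub>n\<close> by orthogonality; applying \<open>K\<^sup>*\<close> and using
  \<open>K\<^sup>* K = N\<close> gives \<open>N r\<^sub>j = cnj (K\<^sub>n\<^sub>j) d\<close>, whose modulus does not depend on \<open>j\<close>.\<close>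

lemma completion_cmod_last_row_cofactor:
  assumes H: "H \<in> carrier_mat n (Suc n)" and K: "complex_hadamard (Suc n) K"
    and ext: "\<And>i j. i < n \<Longrightarrow> j < Suc n \<Longrightarrow> K $$ (i, j) = H $$ (i, j)"
    and j: "j < Suc n"
  shows "cmod (last_row_cofactor H j) * real (Suc n) =
    cmod (\<Sum>l<Suc n. K $$ (n, l) * last_row_cofactor H l)"
proof -
  define r where "r = last_row_cofactor H"
  define d where "d = (\<Sum>l<Suc n. K $$ (n, l) * r l)"
  have Kr: "(\<Sum>l<Suc n. K $$ (i, l) * r l) = (if i = n then d else 0)" if "i < Suc n" for i
    using that ext last_row_cofactor_orthogonal[OF H]
    by (auto simp: d_def r_def less_Suc_eq simp del: sum.lessThan_Suc)
  have "r j * of_nat (Suc n) = (\<Sum>l<Suc n. if j = l then r l * of_nat (Suc n) else 0)"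
    using j by simp
  also have "\<dots> = (\<Sum>l<Suc n. r l * (\<Sum>i<Suc n. cnj (K $$ (i, j)) * K $$ (i, l)))"
    by (intro sum.cong refl) (use complex_hadamard_col_inner[OF K j] in auto)
  also have "\<dots> = (\<Sum>l<Suc n. \<Sum>i<Suc n. cnj (K $$ (i, j)) * (K $$ (i, l) * r l))"
    by (simp add: sum_distrib_left ac_simps del: sum.lessThan_Suc)
  also have "\<dots> = (\<Sum>i<Suc n. cnj (K $$ (i, j)) * (\<Sum>l<Suc n. K $$ (i, l) * r l))"
    by (subst sum.swap) (simp add: sum_distrib_left del: sum.lessThan_Suc)
  also have "\<dots> = cnj (K $$ (n, j)) * d"
    by (simp add: Kr if_distrib sum.delta cong: if_cong del: sum.lessThan_Suc)
  finally have "cmod (r j) * real (Suc n) = cmod (K $$ (n, j)) * cmod d"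
    by (metis norm_mult complex_mod_cnj norm_of_nat)
  moreover have "cmod (K $$ (n, j)) = 1" using K j by (simp add: complex_hadamard_def partial_hadamard_def)
  ultimately show ?thesis by (simp add: r_def d_def)
qed

lemma completion_cmod_det_remove_col_eq:
  assumes H: "H \<in> carrier_mat n (Suc n)" and K: "complex_hadamard (Suc n) K"
    and ext: "\<And>i j. i < n \<Longrightarrow> j < Suc n \<Longrightarrow> K $$ (i, j) = H $$ (i, j)"
    and "j < Suc n" "k < Suc n"
  shows "cmod (det (remove_col j H)) = cmod (det (remove_col k H))"
proof -
  have "cmod (last_row_cofactor H j) * real (Suc n) = cmod (last_row_cofactor H k) * real (Suc n)"
    using completion_cmod_last_row_cofactor[OF H K ext assms(4)]
      completion_cmod_last_row_cofactor[OF H K ext assms(5)] by (rule trans[OF _ sym])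
  then show ?thesis by (simp add: cmod_last_row_cofactor)
qed

lemma hadamard_completion_eq_append_row:
  assumes H: "H \<in> carrier_mat n (Suc n)"
  defines "x \<equiv> \<lambda>j. (-1) ^ Suc n *
    complex_of_real (real (Suc n) powr (1 - real (Suc n) / 2)) * cnj (last_row_cofactor H j)"
  shows "hadamard_completion (Suc n) H = append_row H x"
proof (rule eq_matI)
  fix i j assume "i < dim_row (append_row H x)" "j < dim_col (append_row H x)"
  moreover have "(-1) ^ (j + 1) = (-1) ^ Suc n * ((-1) ^ (n + j) :: complex)"
    by (simp add: power_add flip: power2_eq_square power_mult)
  ultimately show "hadamard_completion (Suc n) H $$ (i, j) = append_row H x $$ (i, j)"
    using H by (auto simp: hadamard_completion_def append_row_def last_row_cofactor_def x_def)
qed (use H in \<open>auto simp: hadamard_completion_def append_row_def\<close>)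

lemma complex_hadamard_hadamard_completion:
  assumes PH: "partial_hadamard n (Suc n) H"
    and minors: "\<And>j. j < Suc n \<Longrightarrow>
      cmod (det (remove_col j H)) = real (Suc n) powr (real (Suc n) / 2 - 1)"
  shows "complex_hadamard (Suc n) (hadamard_completion (Suc n) H)"
proof -
  have H: "H \<in> carrier_mat n (Suc n)" using PH by (simp add: partial_hadamard_def)
  define a where "a = real (Suc n) powr (1 - real (Suc n) / 2)"
  define x where "x = (\<lambda>j. (-1) ^ Suc n * complex_of_real a * cnj (last_row_cofactor H j))"
  have orth: "(\<Sum>j<Suc n. H $$ (i, j) * cnj (x j)) = 0" if "i < n" for i
  proof -
    have "(\<Sum>j<Suc n. H $$ (i, j) * cnj (x j)) =
      (\<Sum>j<Suc n. (-1) ^ Suc n * complex_of_real a * (H $$ (i, j) * last_row_cofactor H j))"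
      by (intro sum.cong refl) (simp add: x_def)
    also have "\<dots> = 0"
      using last_row_cofactor_orthogonal[OF H that] by (simp only: mult_zero_right flip: sum_distrib_left)
    finally show ?thesis .
  qed
  have "cmod (x j) = a * real (Suc n) powr (real (Suc n) / 2 - 1)" if "j < Suc n" for j
    using minors[OF that] by (simp add: x_def norm_mult norm_power cmod_last_row_cofactor a_def)
  also have "\<dots> = real (Suc n) powr 0"
    unfolding a_def powr_add[symmetric]
    by (rule arg_cong[where f = "\<lambda>e. real (Suc n) powr e"]) (simp add: field_simps)
  also have "\<dots> = 1" by simp
  finally have "partial_hadamard (Suc n) (Suc n) (append_row H x)"
    using partial_hadamard_append_row[OF PH orth] by blast
  then show ?thesis
    unfolding complex_hadamard_def hadamard_completion_eq_append_row[OF H] x_def a_def .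
qed

theorem proposition3p1:
  fixes N :: nat and H :: "complex mat"
  assumes "N \<ge> 2"
    and "partial_hadamard (N - 1) N H"
  shows "((\<exists>K. complex_hadamard N K \<and> (\<forall>i<N - 1. \<forall>j<N. K $$ (i, j) = H $$ (i, j)))
            \<longleftrightarrow> (\<forall>j<N. \<forall>k<N. cmod (det (remove_col j H)) = cmod (det (remove_col k H))))
       \<and> ((\<forall>j<N. \<forall>k<N. cmod (det (remove_col j H)) = cmod (det (remove_col k H)))
            \<longleftrightarrow> (\<forall>j<N. cmod (det (remove_col j H)) = real N powr (real N / 2 - 1)))
       \<and> ((\<exists>K. complex_hadamard N K \<and> (\<forall>i<N - 1. \<forall>j<N. K $$ (i, j) = H $$ (i, j)))
            \<longrightarrow> complex_hadamard N (hadamard_completion N H))"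
proof -
  obtain n where N: "N = Suc n" using assms(1) by (cases N) auto
  have PH: "partial_hadamard n (Suc n) H" using assms(2) N by simp
  then have H: "H \<in> carrier_mat n (Suc n)" by (simp add: partial_hadamard_def)
  let ?completable = "\<exists>K. complex_hadamard N K \<and> (\<forall>i<N - 1. \<forall>j<N. K $$ (i, j) = H $$ (i, j))"
  let ?const = "\<forall>j<N. \<forall>k<N. cmod (det (remove_col j H)) = cmod (det (remove_col k H))"
  let ?value = "\<forall>j<N. cmod (det (remove_col j H)) = real N powr (real N / 2 - 1)"
  have "?const" if completable: ?completable
  proof -
    obtain K where K: "complex_hadamard (Suc n) K"
      and ext: "\<And>i j. i < n \<Longrightarrow> j < Suc n \<Longrightarrow> K $$ (i, j) = H $$ (i, j)"
      using completable by (auto simp: N)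
    show ?thesis using completion_cmod_det_remove_col_eq[OF H K ext] unfolding N by blast
  qed
  moreover have "?value" if const: ?const
  proof (intro allI impI)
    fix j assume "j < N"
    have "cmod (det (remove_col 0 H)) = real N powr (real N / 2 - 1)"
      using const unfolding N by (intro cmod_det_remove_col_const_value[OF PH]) blast
    moreover have "cmod (det (remove_col j H)) = cmod (det (remove_col 0 H))"
      using const \<open>j < N\<close> N by blast
    ultimately show "cmod (det (remove_col j H)) = real N powr (real N / 2 - 1)" by simp
  qed
  moreover have "complex_hadamard N (hadamard_completion N H)" if ?value
    using that unfolding N by (blast intro: complex_hadamard_hadamard_completion[OF PH])
  moreover have ?completable if "complex_hadamard N (hadamard_completion N H)"
  proof -
    have "hadamard_completion N H $$ (i, j) = H $$ (i, j)" if "i < N - 1" "j < N" for i j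
      using that by (simp add: hadamard_completion_def)
    then show ?thesis using \<open>complex_hadamard N (hadamard_completion N H)\<close> by blast
  qed
  ultimately show ?thesis by blast
qed

end
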